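(* Let $c>0$ and let $\epsilon_1,\dots,\epsilon_n$ be i.i.d. Rademacher variables. Put $L_c(\epsilon)=\max_{0\le j\le n}\big\{\sum_{i=1}^j\epsilon_i-cj\big\}$. Then $$\mathbb E[L_c(\epsilon)]\le 1+\Big(1-\exp\big(-D(\tfrac{c+1}{2}\,\|\,\tfrac12)\big)\Big)^{-2}.$$
   Context: $D(p\|q)=p\log\frac pq+(1-p)\log\frac{1-p}{1-q}$ is the binary Kullback–Leibler divergence, with the convention $D(p\|\frac12)=+\infty$ (so $\exp(-D)=0$) when $p>1$. *)

theory Defs
  imports "HOL-Probability.Probability"
begin

text \<open>Binary Kullback--Leibler divergence D(p||q), natural logarithm.
  Note 0 * ln 0 = 0 in Isabelle, matching the convention 0 log 0 = 0.\<close>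
definition bin_KL :: "real \<Rightarrow> real \<Rightarrow> real" where
  "bin_KL p q = p * ln (p / q) + (1 - p) * ln ((1 - p) / (1 - q))"

text \<open>exp(-D(p||1/2)), with the convention D(p||1/2) = +infinity (so the value is 0) for p > 1.\<close>
definition exp_neg_KL_half :: "real \<Rightarrow> real" where
  "exp_neg_KL_half p = (if p > 1 then 0 else exp (- bin_KL p (1/2)))"

definition rademacher :: "real pmf" where
  "rademacher = map_pmf (\<lambda>b. if b then 1 else -1) (bernoulli_pmf (1/2))"

definition L_c :: "real \<Rightarrow> nat \<Rightarrow> (nat \<Rightarrow> real) \<Rightarrow> real" where
  "L_c c n eps = Max ((\<lambda>j. (\<Sum>i=1..j. eps i) - c * real j) ` {0..n})"

end

theory Submission
  imports Defs
begin

text \<open>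
  Write \<open>S j = \<epsilon>\<^sub>1 + \<dots> + \<epsilon>\<^sub>j - c j\<close>, so that \<open>S j \<le> j\<close>. If \<open>L\<^sub>c = S m > 0\<close>, every
  \<open>k < \<lceil>L\<^sub>c\<rceil>\<close> satisfies \<open>k < m\<close>, so \<open>L\<^sub>c \<le> \<Sum>\<^sub>k\<^sub>\<le>\<^sub>n \<Sum>\<^sub>j\<^sub>>\<^sub>k exp (\<lambda> S j)\<close> for every \<open>\<lambda> > 0\<close>.
  By independence \<open>E exp (\<lambda> S j) = r\<^sup>j\<close> with \<open>r = E exp (\<lambda> (\<epsilon> - c))\<close>, and the double
  geometric sum is at most \<open>(1 - r)\<^sup>-\<^sup>2\<close>. The Chernoff-optimal tilt \<open>\<lambda> = artanh c\<close> gives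
  \<open>r = exp (-D((c+1)/2 \<parallel> 1/2))\<close>, which is below 1 by Gibbs' inequality.
  For \<open>c \<ge> 1\<close> the walk never rises above 0.
\<close>

lemma ln_less_minus_one:
  fixes x :: real
  assumes "0 < x" "x \<noteq> 1"
  shows "ln x < x - 1"
  using assms ln_eq_minus_one ln_le_minus_one by force

lemma bin_KL_pos:
  assumes "0 < p" "p < 1" "0 < q" "q < 1" "p \<noteq> q"
  shows "bin_KL p q > 0"
proof -
  have "p * ln (q / p) < p * (q / p - 1)"
    using assms by (intro mult_strict_left_mono ln_less_minus_one) auto
  moreover have "(1 - p) * ln ((1 - q) / (1 - p)) \<le> (1 - p) * ((1 - q) / (1 - p) - 1)"
    using assms by (intro mult_left_mono ln_le_minus_one) auto
  moreover have "p * (q / p - 1) + (1 - p) * ((1 - q) / (1 - p) - 1) = 0"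
    using assms by (simp add: field_simps)
  moreover have "bin_KL p q = - (p * ln (q / p) + (1 - p) * ln ((1 - q) / (1 - p)))"
    using assms by (simp add: bin_KL_def ln_div algebra_simps)
  ultimately show ?thesis by linarith
qed

lemma bin_KL_half:
  "bin_KL ((c + 1) / 2) (1 / 2) = ((1 + c) * ln (1 + c) + (1 - c) * ln (1 - c)) / 2"
proof -
  have arg: "(c + 1) / 2 / (1 / 2) = 1 + c" "(1 - (c + 1) / 2) / (1 - 1 / 2) = 1 - c"
    by (simp_all add: field_simps)
  have weight: "1 - (c + 1) / 2 = (1 - c) / 2"
    by (simp add: field_simps)
  show ?thesis
    unfolding bin_KL_def arg unfolding weight by (simp add: field_simps)
qed

lemma artanh_pos:
  fixes c :: real
  assumes "0 < c" "c < 1"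
  shows "0 < artanh c"
proof -
  have "1 < (1 + c) / (1 - c)"
    using assms by (simp add: field_simps)
  then show ?thesis
    by (simp add: artanh_def)
qed

lemma rademacher_tilt_artanh:
  assumes "\<bar>c\<bar> < 1"
  shows "(exp (artanh c * (1 - c)) + exp (artanh c * (-1 - c))) / 2
           = exp (- bin_KL ((c + 1) / 2) (1 / 2))"
proof -
  define K where "K = bin_KL ((c + 1) / 2) (1 / 2)"
  have "0 < 1 + c" "0 < 1 - c"
    using assms by auto
  have K: "K = ((1 + c) * ln (1 + c) + (1 - c) * ln (1 - c)) / 2"
    unfolding K_def by (rule bin_KL_half)
  have artanh: "artanh c = (ln (1 + c) - ln (1 - c)) / 2"
    using \<open>0 < 1 + c\<close> \<open>0 < 1 - c\<close> by (simp add: artanh_def ln_div)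
  have arg_plus: "artanh c * (1 - c) = ln (1 + c) - K"
    by (simp add: K artanh field_simps)
  have plus: "exp (artanh c * (1 - c)) = (1 + c) * exp (- K)"
    unfolding arg_plus using \<open>0 < 1 + c\<close> by (simp add: exp_diff exp_minus divide_inverse)
  have arg_minus: "artanh c * (-1 - c) = ln (1 - c) - K"
    by (simp add: K artanh field_simps)
  have minus: "exp (artanh c * (-1 - c)) = (1 - c) * exp (- K)"
    unfolding arg_minus using \<open>0 < 1 - c\<close> by (simp add: exp_diff exp_minus divide_inverse)
  show ?thesis
    unfolding plus minus K_def by (simp add: field_simps)
qed

lemma exp_neg_KL_half_tilt:
  assumes "0 < c" "c < 1"
  shows "exp_neg_KL_half ((c + 1) / 2) = (exp (artanh c * (1 - c)) + exp (artanh c * (-1 - c))) / 2"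
    and "0 \<le> exp_neg_KL_half ((c + 1) / 2)" "exp_neg_KL_half ((c + 1) / 2) < 1"
proof -
  show "exp_neg_KL_half ((c + 1) / 2) = (exp (artanh c * (1 - c)) + exp (artanh c * (-1 - c))) / 2"
    using assms by (simp add: exp_neg_KL_half_def rademacher_tilt_artanh)
  have "bin_KL ((c + 1) / 2) (1 / 2) > 0"
    using assms by (intro bin_KL_pos) auto
  then show "0 \<le> exp_neg_KL_half ((c + 1) / 2)" "exp_neg_KL_half ((c + 1) / 2) < 1"
    using assms by (auto simp: exp_neg_KL_half_def)
qed

lemma set_pmf_rademacher: "set_pmf rademacher = {-1, 1}"
  unfolding rademacher_def by auto

lemma expectation_rademacher:
  fixes g :: "real \<Rightarrow> real"
  shows "measure_pmf.expectation rademacher g = (g 1 + g (-1)) / 2"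
  unfolding rademacher_def by simp

lemma finite_set_pmf_Pi_rademacher:
  fixes n :: nat
  shows "finite (set_pmf (Pi_pmf {1..n} d (\<lambda>_. rademacher)))"
  by (subst set_Pi_pmf) (auto simp: set_pmf_rademacher)

lemma set_pmf_Pi_rademacher_le_one:
  fixes n :: nat
  assumes "eps \<in> set_pmf (Pi_pmf {1..n} d (\<lambda>_. rademacher))" "i \<in> {1..n}"
  shows "eps i \<le> 1"
  using assms by (subst (asm) set_Pi_pmf) (auto simp: set_pmf_rademacher PiE_dflt_def)

lemma expectation_Pi_pmf_prod_prefix:
  fixes g :: "'a \<Rightarrow> real"
  assumes "j \<le> n" "integrable (measure_pmf p) g" "\<And>x. x \<in> set_pmf p \<Longrightarrow> g x \<ge> 0"
  shows "measure_pmf.expectation (Pi_pmf {1..n} d (\<lambda>_. p)) (\<lambda>eps. \<Prod>i=1..j. g (eps i))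
           = measure_pmf.expectation p g ^ j"
proof -
  define f where "f i x = (if i \<le> j then g x else 1)" for i x
  have "{1..n} \<inter> {i. i \<le> j} = {1..j}"
    using assms(1) by auto
  then have prefix: "(\<Prod>i\<in>{1..n}. if i \<le> j then h i else 1) = (\<Prod>i=1..j. h i)" for h :: "nat \<Rightarrow> real"
    by (simp add: prod.If_cases)
  have "(\<Prod>i=1..j. g (eps i)) = (\<Prod>i\<in>{1..n}. f i (eps i))" for eps
    unfolding f_def by (rule prefix[symmetric])
  then have "measure_pmf.expectation (Pi_pmf {1..n} d (\<lambda>_. p)) (\<lambda>eps. \<Prod>i=1..j. g (eps i))
          = measure_pmf.expectation (Pi_pmf {1..n} d (\<lambda>_. p)) (\<lambda>eps. \<Prod>i\<in>{1..n}. f i (eps i))"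
    by (simp only:)
  also have "\<dots> = (\<Prod>i\<in>{1..n}. measure_pmf.expectation p (f i))"
  proof (intro expectation_prod_Pi_pmf)
    show "integrable (measure_pmf p) (f i)" for i
      using assms(2) by (cases "i \<le> j") (simp_all add: f_def[abs_def])
  qed (use assms(3) in \<open>auto simp: f_def\<close>)
  also have "\<dots> = (\<Prod>i\<in>{1..n}. if i \<le> j then measure_pmf.expectation p g else 1)"
    by (intro prod.cong) (simp_all add: f_def[abs_def])
  also have "\<dots> = measure_pmf.expectation p g ^ j"
    unfolding prefix[of "\<lambda>_. measure_pmf.expectation p g"] by simp
  finally show ?thesis .
qed

lemma expectation_exp_rademacher_walk:
  assumes "j \<le> n"
  shows "measure_pmf.expectation (Pi_pmf {1..n} d (\<lambda>_. rademacher))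
           (\<lambda>eps. exp (l * ((\<Sum>i=1..j. eps i) - c * real j)))
         = ((exp (l * (1 - c)) + exp (l * (-1 - c))) / 2) ^ j"
proof -
  have "exp (l * ((\<Sum>i=1..j. eps i) - c * real j)) = (\<Prod>i=1..j. exp (l * (eps i - c)))" for eps
    by (simp add: exp_sum[symmetric] sum_subtractf sum_distrib_left right_diff_distrib)
  then have "measure_pmf.expectation (Pi_pmf {1..n} d (\<lambda>_. rademacher))
               (\<lambda>eps. exp (l * ((\<Sum>i=1..j. eps i) - c * real j)))
             = measure_pmf.expectation (Pi_pmf {1..n} d (\<lambda>_. rademacher))
               (\<lambda>eps. \<Prod>i=1..j. exp (l * (eps i - c)))"
    by (simp only:)
  also have "\<dots> = measure_pmf.expectation rademacher (\<lambda>x. exp (l * (x - c))) ^ j"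
    using assms
    by (intro expectation_Pi_pmf_prod_prefix integrable_measure_pmf_finite) (auto simp: set_pmf_rademacher)
  finally show ?thesis
    by (simp add: expectation_rademacher)
qed

lemma expectation_sum_exp_tails_rademacher:
  "measure_pmf.expectation (Pi_pmf {1..n} d (\<lambda>_. rademacher))
     (\<lambda>eps. \<Sum>k=0..n. \<Sum>j=Suc k..n. exp (l * ((\<Sum>i=1..j. eps i) - c * real j)))
   = (\<Sum>k=0..n. \<Sum>j=Suc k..n. ((exp (l * (1 - c)) + exp (l * (-1 - c))) / 2) ^ j)"
proof -
  have int: "integrable (measure_pmf (Pi_pmf {1..n} d (\<lambda>_. rademacher))) f" for f :: "_ \<Rightarrow> real"
    by (rule integrable_measure_pmf_finite[OF finite_set_pmf_Pi_rademacher])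
  show ?thesis
    unfolding Bochner_Integration.integral_sum[OF int]
    by (intro sum.cong refl expectation_exp_rademacher_walk) auto
qed

lemma Max_le_sum_exp_tails:
  fixes F :: "nat \<Rightarrow> real"
  assumes "l > 0" and F_le: "\<And>j. j \<le> n \<Longrightarrow> F j \<le> real j"
  shows "Max (F ` {0..n}) \<le> (\<Sum>k=0..n. \<Sum>j=Suc k..n. exp (l * F j))"
proof -
  define T where "T k = (\<Sum>j=Suc k..n. exp (l * F j))" for k
  have T_nonneg: "T k \<ge> 0" for k
    unfolding T_def by (intro sum_nonneg) auto
  have "Max (F ` {0..n}) \<in> F ` {0..n}"
    by (intro Max_in) auto
  then obtain m where m: "m \<le> n" "Max (F ` {0..n}) = F m"
    by (metis atLeastAtMost_iff imageE)
  show ?thesis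
  proof (cases "F m \<le> 0")
    case True
    have "0 \<le> (\<Sum>k=0..n. T k)"
      by (intro sum_nonneg T_nonneg)
    then show ?thesis
      using m True unfolding T_def by linarith
  next
    case False
    define K where "K = nat \<lceil>F m\<rceil>"
    have "K \<le> m"
      using F_le[OF m(1)] by (simp add: K_def nat_le_iff ceiling_le_iff)
    have T_ge_one: "T k \<ge> 1" if "k < K" for k
    proof -
      have "k < m"
        using that \<open>K \<le> m\<close> by linarith
      then have "exp (l * F m) \<le> T k"
        unfolding T_def using m(1) by (intro member_le_sum) auto
      moreover have "1 \<le> exp (l * F m)"
        using \<open>l > 0\<close> False by simp
      ultimately show ?thesis by linarith
    qed
    have "F m \<le> real K"
      unfolding K_def by linarith
    also have "\<dots> = (\<Sum>k<K. 1)"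
      by simp
    also have "\<dots> \<le> (\<Sum>k<K. T k)"
      by (intro sum_mono T_ge_one) auto
    also have "\<dots> \<le> (\<Sum>k=0..n. T k)"
      using \<open>K \<le> m\<close> m(1) by (intro sum_mono2 T_nonneg) auto
    finally show ?thesis
      using m by (simp add: T_def)
  qed
qed

lemma sum_tail_powers_le:
  fixes r :: real
  assumes "0 \<le> r" "r < 1"
  shows "(\<Sum>k=0..n. \<Sum>j=Suc k..n. r ^ j) \<le> 1 / (1 - r)\<^sup>2"
proof -
  have tail: "(\<Sum>j=Suc k..n. r ^ j) \<le> r ^ k / (1 - r)" for k
  proof (cases "k < n")
    case True
    have "r ^ Suc k \<le> r ^ k" "0 \<le> r ^ Suc n"
      using assms by (simp_all add: mult_left_le_one_le)
    then have "r ^ Suc k - r ^ Suc n \<le> r ^ k"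
      by linarith
    then show ?thesis
      using assms True by (simp add: sum_gp divide_right_mono)
  qed (use assms in simp)
  have "(\<Sum>k=0..n. \<Sum>j=Suc k..n. r ^ j) \<le> (\<Sum>k=0..n. r ^ k / (1 - r))"
    by (intro sum_mono tail)
  also have "\<dots> = (\<Sum>k=0..n. r ^ k) / (1 - r)"
    by (simp add: sum_divide_distrib)
  also have "(\<Sum>k=0..n. r ^ k) \<le> 1 / (1 - r)"
    using assms by (simp add: sum_gp divide_right_mono)
  finally show ?thesis
    using assms by (simp add: power2_eq_square divide_right_mono)
qed

lemma sum_upto_le_of_le_one:
  fixes eps :: "nat \<Rightarrow> real"
  assumes "\<And>i. i \<in> {1..j} \<Longrightarrow> eps i \<le> 1"
  shows "(\<Sum>i=1..j. eps i) \<le> real j"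
  using sum_bounded_above[of "{1..j}" eps 1] assms by auto

lemma L_c_nonpos:
  assumes "1 \<le> c" "\<And>i. i \<in> {1..n} \<Longrightarrow> eps i \<le> 1"
  shows "L_c c n eps \<le> 0"
proof -
  have "(\<Sum>i=1..j. eps i) - c * real j \<le> 0" if "j \<le> n" for j
  proof -
    have "(\<Sum>i=1..j. eps i) \<le> real j"
      using assms(2) that by (intro sum_upto_le_of_le_one) auto
    moreover have "real j \<le> c * real j"
      using assms(1) by (simp add: mult_le_cancel_right1)
    ultimately show ?thesis
      by linarith
  qed
  then show ?thesis
    unfolding L_c_def by (subst Max_le_iff) auto
qed

lemma L_c_le_sum_exp_tails:
  assumes "0 \<le> c" "0 < l" "\<And>i. i \<in> {1..n} \<Longrightarrow> eps i \<le> 1"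
  shows "L_c c n eps \<le> (\<Sum>k=0..n. \<Sum>j=Suc k..n. exp (l * ((\<Sum>i=1..j. eps i) - c * real j)))"
  unfolding L_c_def
proof (rule Max_le_sum_exp_tails[OF \<open>0 < l\<close>])
  fix j
  assume "j \<le> n"
  then have "(\<Sum>i=1..j. eps i) \<le> real j"
    using assms(3) by (intro sum_upto_le_of_le_one) auto
  moreover have "0 \<le> c * real j"
    using assms(1) by simp
  ultimately show "(\<Sum>i=1..j. eps i) - c * real j \<le> real j"
    by linarith
qed

theorem lemma6:
  fixes c :: real and n :: nat
  assumes "c > 0"
  shows "measure_pmf.expectation (Pi_pmf {1..n} 0 (\<lambda>_. rademacher)) (L_c c n)
           \<le> 1 + (1 - exp_neg_KL_half ((c + 1) / 2)) powi (-2)"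
proof -
  let ?P = "Pi_pmf {1..n} (0::real) (\<lambda>_. rademacher)"
  have int: "integrable (measure_pmf ?P) f" for f :: "_ \<Rightarrow> real"
    by (rule integrable_measure_pmf_finite[OF finite_set_pmf_Pi_rademacher])
  show ?thesis
  proof (cases "c \<ge> 1")
    case True
    then have "measure_pmf.expectation ?P (L_c c n) \<le> measure_pmf.expectation ?P (\<lambda>_. 0)"
      by (intro integral_mono_AE int AE_pmfI L_c_nonpos set_pmf_Pi_rademacher_le_one)
    then show ?thesis
      by (simp add: power_int_minus add_increasing2)
  next
    case False
    then have "c < 1"
      by simp
    define r where "r = exp_neg_KL_half ((c + 1) / 2)"
    note r = exp_neg_KL_half_tilt[OF assms \<open>c < 1\<close>, folded r_def]
    have "measure_pmf.expectation ?P (L_c c n)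
          \<le> measure_pmf.expectation ?P
               (\<lambda>eps. \<Sum>k=0..n. \<Sum>j=Suc k..n. exp (artanh c * ((\<Sum>i=1..j. eps i) - c * real j)))"
      using assms \<open>c < 1\<close>
      by (intro integral_mono_AE int AE_pmfI L_c_le_sum_exp_tails artanh_pos set_pmf_Pi_rademacher_le_one) auto
    also have "\<dots> = (\<Sum>k=0..n. \<Sum>j=Suc k..n. r ^ j)"
      by (simp only: expectation_sum_exp_tails_rademacher r(1))
    also have "\<dots> \<le> 1 / (1 - r)\<^sup>2"
      using r by (intro sum_tail_powers_le) auto
    also have "\<dots> \<le> 1 + (1 - r) powi (-2)"
      by (simp add: power_int_minus divide_inverse)
    finally show ?thesis
      unfolding r_def[symmetric] .
  qed
qed

end
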